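(* Let $\beta_{(j_1,\ldots,j_s)}(m_1,\ldots,m_r)$ be the integers defined below. For every $r\ge 2$, all integers $m_1,\ldots,m_r\ge2$, every $1\le s\le r-1$ and every $1\le j_1<\cdots<j_s\le r$, $$\beta_{(j_1,\ldots,j_s)}(m_1,\ldots,m_r)\equiv 0\pmod{\prod_{\substack{1\le t\le r\\ t\notin\{j_1,\ldots,j_s\}}}\mu(m_t,t)}.$$ Moreover, if $m_1=m_2=\cdots=m_r=m$, then $\beta_{(j_1,\ldots,j_s)}(m_1,\ldots,m_r)\equiv 0\pmod{m^{r-s}/\gcd(m,2)}$.
   Context: For positive integers $a,b$, $\mu(a,b):=a/\gcd(a,b)$. For integers $m\ge2$, $r\ge1$, the numbers $\alpha_{m,r}(1),\ldots,\alpha_{m,r}(r)$ are the unique integers with $\binom{mn+r-1}{r}=\sum_{i=1}^{r}\alpha_{m,r}(i)\binom{n+i-1}{i}$ for all positive integers $n$. The integers $\beta_{(j_1,\ldots,j_s)}(m_1,\ldots,m_r)$, for $r\ge2$, $m_1,\ldots,m_r\ge2$, $1\le s\le r-1$, $1\le j_1<\cdots<j_s\le r$, are defined recursively in $r$ as follows, where $C_{r,i}:=\prod_{j=1}^{r-i-1}m_j^{\,j}\prod_{j=r-i}^{r-1}m_j^{\,r-i-1}$, empty sums are $0$, empty products are $1$, and any $\beta$ having a nonpositive entry in its index tuple is $0$: (i) if $j_s=r$: for $s\ge2$, $\beta_{(j_1,\ldots,j_{s-1},r)}(m_1,\ldots,m_r)=\beta_{(j_1,\ldots,j_{s-1})}(m_1,\ldots,m_{r-1})$,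 and $\beta_{(r)}(m_1,\ldots,m_r)=0$; (ii) if $(j_1,\ldots,j_s)=(r-s,\ldots,r-1)$: $\beta_{(r-s,\ldots,r-1)}(m_1,\ldots,m_r)=-\big[C_{r,s}\alpha_{m_r,r}(s)+\sum_{i=s+1}^{r-1}C_{r,i}\alpha_{m_r,r}(i)\beta_{(i-s+1,\ldots,i)}(m_{r-i},\ldots,m_{r-1})\big]$; (iii) otherwise: $\beta_{(j_1,\ldots,j_s)}(m_1,\ldots,m_r)=-\sum_{i=s+1}^{r-1}C_{r,i}\alpha_{m_r,r}(i)\beta_{(j_1-(r-i)+1,\ldots,j_s-(r-i)+1)}(m_{r-i},\ldots,m_{r-1})$. (With $h_r=q/(1-q)^{r+1}$, $H_\emptyset=q/(1-q)$, $H_{(m_1,\ldots,m_r)}=U_{m_r}\big(\tfrac{1}{1-q}H_{(m_1,\ldots,m_{r-1})}\big)$, $U_m(\sum a(n)q^n)=\sum a(mn)q^n$, these are coefficients for which $H_{(m_1,\ldots,m_r)}=m_1m_2^2\cdots m_r^rh_r-\sum_{s,\,j_1<\cdots<j_s}\beta_{(j_1,\ldots,j_s)}(m_1,\ldots,m_r)H_{(m_{j_1},\ldots,m_{j_s})}$.) *)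

theory Defs
  imports Main
begin

definition mu :: "nat \<Rightarrow> nat \<Rightarrow> nat" where
  "mu a b = a div gcd a b"

definition alpha :: "nat \<Rightarrow> nat \<Rightarrow> nat \<Rightarrow> int" where
  "alpha m r = (THE f :: nat \<Rightarrow> int. (\<forall>i. i \<notin> {1..r} \<longrightarrow> f i = 0) \<and>
      (\<forall>n::nat. n \<ge> 1 \<longrightarrow>
         int ((m * n + r - 1) choose r) = (\<Sum>i=1..r. f i * int ((n + i - 1) choose i))))"

text \<open>C_{r,i} for ms = [m_1,...,m_r] (m_j = ms!(j-1)).\<close>
definition Ccoef :: "nat list \<Rightarrow> nat \<Rightarrow> int" where
  "Ccoef ms i = (let r = length ms in
     (\<Prod>j\<in>{1..r-i-1}. int (ms!(j-1)) ^ j) * (\<Prod>j\<in>{r-i..r-1}. int (ms!(j-1)) ^ (r-i-1)))"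

text \<open>The sublist (m_{r-i},...,m_{r-1}) is take i (drop (r-i-1) ms).
  Values outside the domain of the paper's definition (s = 0, s >= r) are set to 0.\<close>
function beta :: "int list \<Rightarrow> nat list \<Rightarrow> int" where
  "beta js ms = (let r = length ms; s = length js in
     if (\<exists>j\<in>set js. j \<le> 0) \<or> js = [] \<or> r = 0 \<or> s \<ge> r then 0
     else if last js = int r then (if s = 1 then 0 else beta (butlast js) (butlast ms))
     else if js = map (\<lambda>k. int (r - s + k)) [0..<s] then
       - (Ccoef ms s * alpha (last ms) r s +
          (\<Sum>i\<in>{s+1..r-1}. Ccoef ms i * alpha (last ms) r i *
              beta (map (\<lambda>k. int (i - s + 1 + k)) [0..<s]) (take i (drop (r-i-1) ms))))
     else
       - (\<Sum>i\<in>{s+1..r-1}. Ccoef ms i * alpha (last ms) r i *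
              beta (map (\<lambda>j. j - int (r - i) + 1) js) (take i (drop (r-i-1) ms))))"
  by pat_completeness auto
termination
  by (relation "measure (\<lambda>(js, ms). length ms)") auto

end

theory Submission
  imports Defs
begin

text \<open>The coefficients alpha have the closed form
  alpha_{m,r}(i) = (-1)^r \<Sum>_k (-1)^k C(i,k) C(mk,r). As mu(m,r) divides every C(mk,r), it divides
  every alpha_{m,r}(i); moreover 2 alpha_{m,r}(r-1) = -m^{r-1}(m-1)(r-1). Both claims then follow by
  induction along the recursion for beta: in a summand C_{r,i} alpha_{m_r,r}(i) beta(...)(m_{r-i},...,m_{r-1})
  the factors mu(m_t,t) with t outside J are absorbed by the powers of m_t in C_{r,i}, by the induction
  hypothesis for the shorter list (as mu(m,t) divides m^k mu(m,t-k)), and by alpha_{m_r,r}(i).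
  When all m_t equal m, C_{r,i} alone supplies m^{r-i}, except for i = r-1, where
  alpha_{m,r}(r-1) does, up to the factor gcd(m,2) lost by the halving.\<close>

section \<open>Closed form of alpha\<close>

lemma Suc_times_choose_Suc_int:
  "int (Suc j) * int (n choose Suc j) = (int n - int j) * int (n choose j)"
proof (cases "j \<le> n")
  case True
  have "Suc j * (n choose Suc j) = (n - j) * (n choose j)"
    using times_binomial_minus1_eq[of "Suc j" n] binomial_absorb_comp[of n j] by simp
  then show ?thesis
    using True by (metis of_nat_diff of_nat_mult)
next
  case False
  then show ?thesis by (simp add: binomial_eq_0)
qed

lemma alternating_sum_times_index:
  fixes X :: "nat \<Rightarrow> int"
  shows "(\<Sum>k\<le>Suc i. (-1)^k * int k * int (Suc i choose k) * X k)
       = int (Suc i) * (\<Sum>k\<le>i. (-1)^Suc k * int (i choose k) * X (Suc k))"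
proof -
  have "(\<Sum>k\<le>Suc i. (-1)^k * int k * int (Suc i choose k) * X k)
      = (\<Sum>k\<le>i. (-1)^Suc k * (int (Suc k) * int (Suc i choose Suc k)) * X (Suc k))"
    by (subst sum.atMost_Suc_shift) (simp add: mult.assoc)
  also have "\<dots> = (\<Sum>k\<le>i. (-1)^Suc k * (int (Suc i) * int (i choose k)) * X (Suc k))"
    by (metis Suc_times_binomial of_nat_mult)
  finally show ?thesis
    by (simp add: sum_distrib_left mult_ac)
qed

lemma alternating_sum_Pascal:
  fixes X :: "nat \<Rightarrow> int"
  shows "(\<Sum>k\<le>i. (-1)^Suc k * int (i choose k) * X (Suc k))
       = (\<Sum>k\<le>Suc i. (-1)^k * int (Suc i choose k) * X k) - (\<Sum>k\<le>i. (-1)^k * int (i choose k) * X k)"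
proof -
  have "(\<Sum>k\<le>i. (-1)^k * int (i choose k) * X k) = (\<Sum>k\<le>Suc i. (-1)^k * int (i choose k) * X k)"
    by simp
  also have "\<dots> = X 0 + (\<Sum>k\<le>i. (-1)^Suc k * int (i choose Suc k) * X (Suc k))"
    by (subst sum.atMost_Suc_shift) simp
  finally show ?thesis
    by (subst sum.atMost_Suc_shift) (simp add: sum.distrib[symmetric] algebra_simps)
qed

definition choose_diff :: "nat \<Rightarrow> nat \<Rightarrow> nat \<Rightarrow> int" where
  "choose_diff m i j = (\<Sum>k\<le>i. (-1)^k * int (i choose k) * int (m*k choose j))"

lemma choose_diff_Suc:
  "int (Suc j) * choose_diff m (Suc i) (Suc j)
     = int m * int (Suc i) * (choose_diff m (Suc i) j - choose_diff m i j) - int j * choose_diff m (Suc i) j"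
proof -
  define X where "X k = int (m*k choose j)" for k
  have "int (Suc j) * choose_diff m (Suc i) (Suc j)
      = (\<Sum>k\<le>Suc i. (-1)^k * int (Suc i choose k) * ((int (m*k) - int j) * X k))"
    unfolding choose_diff_def X_def sum_distrib_left
  proof (intro sum.cong refl)
    fix k
    show "int (Suc j) * ((-1)^k * int (Suc i choose k) * int (m*k choose Suc j))
        = (-1)^k * int (Suc i choose k) * ((int (m*k) - int j) * int (m*k choose j))"
    proof -
      have "int (Suc j) * ((-1)^k * int (Suc i choose k) * int (m*k choose Suc j))
          = (-1)^k * int (Suc i choose k) * (int (Suc j) * int (m*k choose Suc j))"
        by (simp only: mult_ac)
      then show ?thesis by (simp only: Suc_times_choose_Suc_int)
    qed
  qed
  also have "\<dots> = int m * (\<Sum>k\<le>Suc i. (-1)^k * int k * int (Suc i choose k) * X k)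
       - int j * choose_diff m (Suc i) j"
    unfolding choose_diff_def X_def sum_distrib_left sum_subtractf[symmetric]
    by (intro sum.cong refl) (simp add: algebra_simps)
  finally show ?thesis
    unfolding alternating_sum_times_index alternating_sum_Pascal by (simp add: choose_diff_def X_def)
qed

lemma choose_diff_eq_0: "j < i \<Longrightarrow> choose_diff m i j = 0"
proof (induction j arbitrary: i)
  case 0
  then show ?case
    using choose_alternating_sum[of i, where 'a=int] by (simp add: choose_diff_def)
next
  case (Suc j)
  then obtain i' where "i = Suc i'" and "j < i'" by (cases i) auto
  then show ?case
    using choose_diff_Suc[of j m i'] Suc.IH by simp
qed

text \<open>Newton's expansion of the polynomial x \<mapsto> C(mx,r) in the basis C(x,i) has the coefficients
  (-1)^i choose_diff m i r; evaluating it at x = -n gives the identity defining alpha.\<close>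

definition alpha_closed :: "nat \<Rightarrow> nat \<Rightarrow> nat \<Rightarrow> int" where
  "alpha_closed m r i = (-1)^r * choose_diff m i r"

lemma alpha_closed_Suc:
  "int (Suc j) * alpha_closed m (Suc j) (Suc i)
     = int m * int (Suc i) * alpha_closed m j i + (int j - int m * int (Suc i)) * alpha_closed m j (Suc i)"
proof -
  have "int (Suc j) * alpha_closed m (Suc j) (Suc i)
      = - ((-1)^j * (int (Suc j) * choose_diff m (Suc i) (Suc j)))"
    by (simp add: alpha_closed_def)
  then show ?thesis
    unfolding choose_diff_Suc by (simp add: alpha_closed_def algebra_simps)
qed

lemma alpha_closed_0: "alpha_closed m (Suc j) 0 = 0"
  by (simp add: alpha_closed_def choose_diff_def)

lemma alpha_closed_eq_0: "r < i \<Longrightarrow> alpha_closed m r i = 0"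
  by (simp add: alpha_closed_def choose_diff_eq_0)

lemma alpha_closed_diag: "alpha_closed m r r = int m ^ r"
proof (induction r)
  case 0
  then show ?case by (simp add: alpha_closed_def choose_diff_def)
next
  case (Suc r)
  have "int (Suc r) * alpha_closed m (Suc r) (Suc r) = int (Suc r) * (int m * alpha_closed m r r)"
    using alpha_closed_Suc[of r m r] alpha_closed_eq_0[of r "Suc r" m] by (simp add: algebra_simps)
  then show ?case using Suc.IH by simp
qed

lemma alpha_closed_subdiag: "2 * alpha_closed m (Suc r) r = - (int m ^ r * (int m - 1) * int r)"
proof (induction r)
  case 0
  then show ?case by (simp add: alpha_closed_0)
next
  case (Suc r)
  have "int (Suc (Suc r)) * (2 * alpha_closed m (Suc (Suc r)) (Suc r))
     = int m * int (Suc r) * (2 * alpha_closed m (Suc r) r)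
       + 2 * (int (Suc r) - int m * int (Suc r)) * alpha_closed m (Suc r) (Suc r)"
    using alpha_closed_Suc[of "Suc r" m r] by (simp add: algebra_simps)
  also have "\<dots> = int (Suc (Suc r)) * (- (int m ^ Suc r * (int m - 1) * int (Suc r)))"
    unfolding Suc.IH alpha_closed_diag by (simp add: algebra_simps)
  finally show ?case by (simp only: mult_cancel_left) simp
qed

definition multichoose :: "nat \<Rightarrow> nat \<Rightarrow> int" where
  "multichoose n i = int ((n + i - 1) choose i)"

lemma multichoose_Suc_index:
  assumes "1 \<le> n"
  shows "int (Suc i) * multichoose n (Suc i) = int (n + i) * multichoose n i"
proof -
  obtain n' where n: "n = Suc n'" using assms by (cases n) auto
  have "int (Suc i * (Suc (n' + i) choose Suc i)) = int (Suc (n' + i) * (n' + i choose i))"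
    by (simp only: Suc_times_binomial)
  moreover have "n + Suc i - 1 = Suc (n' + i)" "n + i - 1 = n' + i" "n + i = Suc (n' + i)"
    using n by simp_all
  ultimately show ?thesis
    unfolding multichoose_def by (simp only: of_nat_mult)
qed

lemma multichoose_Pascal:
  "multichoose (Suc n) (Suc k) = multichoose n (Suc k) + multichoose (Suc n) k"
  by (simp add: multichoose_def)

lemma add_times_choose_pred:
  "(a + r) * ((a + r - 1) choose r) = Suc r * ((a + Suc r - 1) choose Suc r)"
proof (cases "a + r")
  case (Suc N)
  then have "a + Suc r - 1 = Suc N" "a + r - 1 = N" by simp_all
  then show ?thesis
    using Suc_times_binomial[of r N] by (simp only: Suc)
qed simp

lemma alpha_closed_expansion:
  assumes "1 \<le> n"
  shows "(\<Sum>i\<le>r. alpha_closed m r i * multichoose n i) = int ((m*n + r - 1) choose r)"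
proof (induction r)
  case 0
  show ?case by (simp add: alpha_closed_def choose_diff_def multichoose_def)
next
  case (Suc r)
  let ?a = "alpha_closed m r" and ?H = "multichoose n"
  have "int (Suc r) * (\<Sum>i\<le>Suc r. alpha_closed m (Suc r) i * ?H i)
      = (\<Sum>i\<le>r. int (Suc r) * alpha_closed m (Suc r) (Suc i) * ?H (Suc i))"
    unfolding sum.atMost_Suc_shift alpha_closed_0 by (simp add: sum_distrib_left mult.assoc)
  also have "\<dots> = (\<Sum>i\<le>r. int m * ?a i * (int (Suc i) * ?H (Suc i)))
      + (\<Sum>i\<le>r. (int r - int m * int (Suc i)) * ?a (Suc i) * ?H (Suc i))"
    unfolding alpha_closed_Suc sum.distrib[symmetric] by (intro sum.cong refl) (simp add: algebra_simps)
  also have "(\<Sum>i\<le>r. int m * ?a i * (int (Suc i) * ?H (Suc i)))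
      = (\<Sum>i\<le>r. int m * int (n + i) * ?a i * ?H i)"
    unfolding multichoose_Suc_index[OF assms] by (simp only: mult_ac)
  also have "(\<Sum>i\<le>r. (int r - int m * int (Suc i)) * ?a (Suc i) * ?H (Suc i))
      = (\<Sum>i\<le>r. (int r - int m * int i) * ?a i * ?H i)"
  proof -
    define g where "g i = (int r - int m * int i) * ?a i * ?H i" for i
    have "g 0 = 0" by (cases r) (simp_all add: g_def alpha_closed_0)
    then have "(\<Sum>i\<le>Suc r. g i) = (\<Sum>i\<le>r. g (Suc i))"
      by (simp only: sum.atMost_Suc_shift)
    moreover have "(\<Sum>i\<le>Suc r. g i) = (\<Sum>i\<le>r. g i)"
      by (simp add: g_def alpha_closed_eq_0)
    ultimately show ?thesis by (simp add: g_def)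
  qed
  also have "(\<Sum>i\<le>r. int m * int (n + i) * ?a i * ?H i) + (\<Sum>i\<le>r. (int r - int m * int i) * ?a i * ?H i)
      = int (m*n + r) * (\<Sum>i\<le>r. ?a i * ?H i)"
    by (simp add: sum.distrib[symmetric] sum_distrib_left algebra_simps)
  also have "\<dots> = int (Suc r) * int ((m*n + Suc r - 1) choose Suc r)"
    unfolding Suc.IH by (simp only: add_times_choose_pred of_nat_mult[symmetric])
  finally show ?case by simp
qed

lemma multichoose_expansion_unique:
  fixes d :: "nat \<Rightarrow> int"
  assumes "\<And>n. N \<le> n \<Longrightarrow> (\<Sum>i=1..r. d i * multichoose n i) = c"
    and "i \<in> {1..r}"
  shows "d i = 0"
  using assms
proof (induction r arbitrary: N d c i)
  case 0
  then show ?case by simp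
next
  case (Suc r)
  have step: "d 1 + (\<Sum>k=1..r. d (Suc k) * multichoose (Suc n) k) = 0" if "N \<le> n" for n
  proof -
    have "0 = (\<Sum>i=1..Suc r. d i * multichoose (Suc n) i) - (\<Sum>i=1..Suc r. d i * multichoose n i)"
      using Suc.prems(1) that by simp
    also have "\<dots> = (\<Sum>i=1..Suc r. d i * (multichoose (Suc n) i - multichoose n i))"
      by (simp add: sum_subtractf right_diff_distrib)
    also have "\<dots> = (\<Sum>k=0..r. d (Suc k) * (multichoose (Suc n) (Suc k) - multichoose n (Suc k)))"
      by (simp only: One_nat_def sum.shift_bounds_cl_Suc_ivl)
    also have "\<dots> = d 1 + (\<Sum>k=1..r. d (Suc k) * multichoose (Suc n) k)"
      by (simp add: multichoose_Pascal sum.atLeast_Suc_atMost multichoose_def)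
    finally show ?thesis by simp
  qed
  have higher: "d (Suc k) = 0" if "k \<in> {1..r}" for k
  proof (rule Suc.IH[of "Suc N" "\<lambda>k. d (Suc k)" "- d 1" k])
    fix n assume "Suc N \<le> n"
    then obtain n' where "n = Suc n'" "N \<le> n'" by (cases n) auto
    then show "(\<Sum>k=1..r. d (Suc k) * multichoose n k) = - d 1"
      using step[of n'] by simp
  qed (use that in simp)
  show ?case
  proof (cases "i = 1")
    case True
    then show ?thesis using step[of N] higher by simp
  next
    case False
    then obtain k where "i = Suc k" "k \<in> {1..r}" using Suc.prems(2) by (cases i) auto
    then show ?thesis using higher by simp
  qed
qed

lemma alpha_eq_alpha_closed:
  assumes "1 \<le> r"
  shows "alpha m r = alpha_closed m r"
proof -
  let ?P = "\<lambda>f::nat\<Rightarrow>int. (\<forall>i. i \<notin> {1..r} \<longrightarrow> f i = 0) \<and>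
      (\<forall>n::nat. n \<ge> 1 \<longrightarrow>
         int ((m * n + r - 1) choose r) = (\<Sum>i=1..r. f i * int ((n + i - 1) choose i)))"
  have vanish: "alpha_closed m r i = 0" if "i \<notin> {1..r}" for i
    using that assms alpha_closed_eq_0[of r i m] alpha_closed_0[of m "r - 1"]
    by (cases i) auto
  have expansion: "(\<Sum>i=1..r. alpha_closed m r i * multichoose n i) = int ((m*n + r - 1) choose r)"
    if "1 \<le> n" for n
  proof -
    have "{..r} = insert 0 {1..r}" by auto
    then show ?thesis
      using alpha_closed_expansion[OF that, of m r] vanish[of 0] by simp
  qed
  have "?P (alpha_closed m r)"
    using vanish expansion by (simp add: multichoose_def)
  moreover have "f = alpha_closed m r" if "?P f" for f
  proof
    fix i
    have "(\<Sum>i=1..r. (f i - alpha_closed m r i) * multichoose n i) = 0" if "1 \<le> n" for n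
      using \<open>?P f\<close> expansion[OF that] that
      by (simp add: multichoose_def sum_subtractf left_diff_distrib)
    then have "i \<in> {1..r} \<Longrightarrow> f i - alpha_closed m r i = 0"
      by (rule multichoose_expansion_unique)
    then show "f i = alpha_closed m r i"
      using \<open>?P f\<close> vanish by (cases "i \<in> {1..r}") auto
  qed
  ultimately show ?thesis
    unfolding alpha_def by (intro the1_equality) blast+
qed

section \<open>Divisibility of alpha\<close>

lemma div_dvd_self:
  fixes a b :: "'a::algebraic_semidom"
  assumes "b dvd a"
  shows "a div b dvd a"
proof -
  have "a div b dvd b * (a div b)" by (rule dvd_triv_right)
  then show ?thesis by (simp only: dvd_mult_div_cancel[OF assms])
qed

lemma div_gcd_dvd_if_dvd_mult:
  fixes a b c :: nat
  assumes "a dvd b * c" and "b \<noteq> 0"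
  shows "a div gcd a b dvd c"
proof -
  define g where "g = gcd a b"
  have "g \<noteq> 0" using assms(2) by (simp add: g_def)
  have "g * (a div g) dvd g * ((b div g) * c)"
    using assms(1) by (simp add: g_def mult.assoc[symmetric])
  then have "a div g dvd (b div g) * c"
    using \<open>g \<noteq> 0\<close> by simp
  moreover have "coprime (a div g) (b div g)"
    unfolding g_def by (rule div_gcd_coprime) (use assms(2) in simp)
  ultimately show ?thesis
    unfolding g_def using coprime_dvd_mult_right_iff by blast
qed

lemma mu_dvd_choose_mult:
  assumes "1 \<le> r"
  shows "mu m r dvd (m*k choose r)"
proof -
  have "r * (m*k choose r) = m * (k * ((m*k - 1) choose (r - 1)))"
    using times_binomial_minus1_eq[of r "m*k"] assms by simp
  then have "m dvd r * (m*k choose r)" by simp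
  then show ?thesis
    unfolding mu_def using assms by (intro div_gcd_dvd_if_dvd_mult) simp_all
qed

lemma mu_dvd_alpha:
  assumes "1 \<le> r"
  shows "int (mu m r) dvd alpha m r i"
  unfolding alpha_eq_alpha_closed[OF assms] alpha_closed_def choose_diff_def
  using mu_dvd_choose_mult[OF assms] by (intro dvd_mult dvd_sum) simp

lemma alpha_subdiag_dvd:
  assumes "2 \<le> r"
  shows "int (m div gcd m 2) * int m ^ (r - 2) dvd alpha m r (r - 1)"
proof -
  obtain k where r: "r = Suc (Suc k)" using assms by (metis add_2_eq_Suc le_Suc_ex)
  define a where "a = alpha m r (r - 1)"
  have a: "2 * a = - (int m * int m ^ k * (int m - 1) * int (Suc k))"
    using alpha_closed_subdiag[of m "Suc k"] alpha_eq_alpha_closed[of r m]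
    by (simp add: a_def r)
  show ?thesis
  proof (cases "even m")
    case True
    then obtain b where "m = 2 * b" by auto
    then have "a = - (int b * int m ^ k * (int m - 1) * int (Suc k))" and "m div gcd m 2 = b"
      using a by simp_all
    then show ?thesis by (simp add: a_def r)
  next
    case False
    have "int m ^ Suc k dvd 2 * a" using a by simp
    moreover have "coprime (int m ^ Suc k) 2" using False by simp
    ultimately have "int m ^ Suc k dvd a" using coprime_dvd_mult_right_iff by blast
    moreover have "gcd m 2 = 1" using False by (simp add: coprime_iff_gcd_eq_1[symmetric])
    ultimately show ?thesis by (simp add: a_def r)
  qed
qed

section \<open>Induction along the recursion for beta\<close>

text \<open>For ms = (m_1,...,m_r): window i ms is (m_{r-i},...,m_{r-1}), shift_indices r i maps an index
  of ms into the window, and final_block r s is the index tuple (r-s,...,r-1) of case (ii).\<close>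

definition final_block :: "nat \<Rightarrow> nat \<Rightarrow> int list" where
  "final_block r s = map (\<lambda>k. int (r - s + k)) [0..<s]"

definition window :: "nat \<Rightarrow> nat list \<Rightarrow> nat list" where
  "window i ms = take i (drop (length ms - i - 1) ms)"

definition shift_indices :: "nat \<Rightarrow> nat \<Rightarrow> int list \<Rightarrow> int list" where
  "shift_indices r i js = map (\<lambda>j. j - int (r - i) + 1) js"

declare beta.simps[simp del]

lemma beta_degenerate:
  assumes "(\<exists>j\<in>set js. j \<le> 0) \<or> js = [] \<or> length ms \<le> length js"
  shows "beta js ms = 0"
  unfolding beta.simps[of js ms] Let_def by (rule if_P) (use assms in auto)

lemma beta_nondegenerate_cases:
  assumes "\<forall>j\<in>set js. 0 < j" and "js \<noteq> []" and "length js < length ms"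
  shows "beta js ms = (if last js = int (length ms)
     then (if length js = 1 then 0 else beta (butlast js) (butlast ms))
     else if js = final_block (length ms) (length js) then
       - (Ccoef ms (length js) * alpha (last ms) (length ms) (length js) +
          (\<Sum>i\<in>{length js + 1..length ms - 1}. Ccoef ms i * alpha (last ms) (length ms) i *
              beta (map (\<lambda>k. int (i - length js + 1 + k)) [0..<length js]) (window i ms)))
     else
       - (\<Sum>i\<in>{length js + 1..length ms - 1}. Ccoef ms i * alpha (last ms) (length ms) i *
              beta (shift_indices (length ms) i js) (window i ms)))"
proof -
  have "\<not> ((\<exists>j\<in>set js. j \<le> 0) \<or> js = [] \<or> length ms = 0 \<or> length js \<ge> length ms)"
    using assms by auto
  then show ?thesis
    unfolding beta.simps[of js ms] Let_def final_block_def window_def shift_indices_def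
    by (simp only: if_False)
qed

lemma beta_last:
  assumes "\<forall>j\<in>set js. 0 < j" and "js \<noteq> []" and "length js < length ms"
    and "last js = int (length ms)"
  shows "beta js ms = (if length js = 1 then 0 else beta (butlast js) (butlast ms))"
  using beta_nondegenerate_cases[OF assms(1-3)] assms(4) by simp

lemma shift_indices_final_block:
  assumes "js = final_block r s" and "s \<le> i" and "i \<le> r"
  shows "shift_indices r i js = map (\<lambda>k. int (i - s + 1 + k)) [0..<s]"
  using assms by (simp add: shift_indices_def final_block_def)

lemma beta_rec:
  assumes "\<forall>j\<in>set js. 0 < j" and "js \<noteq> []" and "length js < length ms"
    and "last js \<noteq> int (length ms)"
  shows "beta js ms = - ((if js = final_block (length ms) (length js)
        then Ccoef ms (length js) * alpha (last ms) (length ms) (length js) else 0)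
      + (\<Sum>i\<in>{length js + 1..length ms - 1}. Ccoef ms i * alpha (last ms) (length ms) i
          * beta (shift_indices (length ms) i js) (window i ms)))"
proof (cases "js = final_block (length ms) (length js)")
  case True
  have "(\<Sum>i\<in>{length js + 1..length ms - 1}. Ccoef ms i * alpha (last ms) (length ms) i *
              beta (map (\<lambda>k. int (i - length js + 1 + k)) [0..<length js]) (window i ms))
      = (\<Sum>i\<in>{length js + 1..length ms - 1}. Ccoef ms i * alpha (last ms) (length ms) i
          * beta (shift_indices (length ms) i js) (window i ms))"
    using shift_indices_final_block[OF True] by (intro sum.cong refl) auto
  then show ?thesis
    using beta_nondegenerate_cases[OF assms(1-3)] assms(4) True by simp
next
  case False
  then show ?thesis
    using beta_nondegenerate_cases[OF assms(1-3)] assms(4) by simp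
qed

lemma sorted_wrt_butlast: "sorted_wrt R xs \<Longrightarrow> sorted_wrt R (butlast xs)"
  by (simp add: butlast_conv_take)

lemma sorted_wrt_less_last:
  fixes xs :: "'a::linorder list"
  assumes "sorted_wrt (<) xs" and "x \<in> set (butlast xs)"
  shows "x < last xs"
proof -
  have "xs \<noteq> []" using assms(2) by auto
  then have "sorted_wrt (<) (butlast xs @ [last xs])" using assms(1) by simp
  then show ?thesis using assms(2) by (simp add: sorted_wrt_append)
qed

lemma sorted_wrt_le_last:
  fixes xs :: "'a::linorder list"
  assumes "sorted_wrt (<) xs" and "x \<in> set xs"
  shows "x \<le> last xs"
proof -
  have "xs \<noteq> []" using assms(2) by auto
  then have "set xs = set (butlast xs @ [last xs])" by simp
  then have "x \<in> set (butlast xs) \<or> x = last xs" using assms(2) by auto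
  then show ?thesis using sorted_wrt_less_last[OF assms(1)] less_imp_le by blast
qed

lemma length_window: "i < length ms \<Longrightarrow> length (window i ms) = i"
  by (simp add: window_def)

lemma set_window_subset: "set (window i ms) \<subseteq> set ms"
  unfolding window_def using set_take_subset set_drop_subset by (rule subset_trans)

lemma sorted_wrt_shift_indices: "sorted_wrt (<) js \<Longrightarrow> sorted_wrt (<) (shift_indices r i js)"
  unfolding shift_indices_def sorted_wrt_map by (erule sorted_wrt_mono_rel[rotated]) simp

lemma shift_indices_le_length_window:
  assumes "i < length ms" and "\<forall>j\<in>set js. j < int (length ms)"
  shows "\<forall>j\<in>set (shift_indices (length ms) i js). j \<le> int (length (window i ms))"
  using assms by (auto simp: shift_indices_def length_window)

text \<open>P is an invariant of the parameter lists that the recursion preserves; it is used to keep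
  all m_t equal.\<close>
locale beta_divisor =
  fixes P :: "nat list \<Rightarrow> bool" and d :: "int list \<Rightarrow> nat list \<Rightarrow> int"
  assumes P_butlast: "P ms \<Longrightarrow> P (butlast ms)"
    and P_window: "P ms \<Longrightarrow> i < length ms \<Longrightarrow> P (window i ms)"
    and dvd_butlast: "P ms \<Longrightarrow> js \<noteq> [] \<Longrightarrow> length js < length ms \<Longrightarrow>
      last js = int (length ms) \<Longrightarrow> d js ms dvd d (butlast js) (butlast ms)"
    and dvd_final_block: "P ms \<Longrightarrow> 1 \<le> s \<Longrightarrow> s < length ms \<Longrightarrow>
      d (final_block (length ms) s) ms dvd Ccoef ms s * alpha (last ms) (length ms) s"
    and dvd_window: "P ms \<Longrightarrow> js \<noteq> [] \<Longrightarrow> length js < i \<Longrightarrow> i < length ms \<Longrightarrow>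
      \<forall>j\<in>set js. int (length ms - i) \<le> j \<and> j < int (length ms) \<Longrightarrow>
      d (shift_indices (length ms) i js) (window i ms) dvd b \<Longrightarrow>
      d js ms dvd Ccoef ms i * alpha (last ms) (length ms) i * b"
begin

lemma dvd_summand:
  assumes "P ms" and "js \<noteq> []" and "length js < i" and "i < length ms"
    and "\<forall>j\<in>set js. j < int (length ms)"
    and "d (shift_indices (length ms) i js) (window i ms)
      dvd beta (shift_indices (length ms) i js) (window i ms)"
  shows "d js ms dvd Ccoef ms i * alpha (last ms) (length ms) i
    * beta (shift_indices (length ms) i js) (window i ms)"
proof (cases "\<forall>j\<in>set js. int (length ms - i) \<le> j")
  case True
  then show ?thesis
    using assms by (intro dvd_window) auto
next
  case False
  then have "\<exists>j\<in>set (shift_indices (length ms) i js). j \<le> 0"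
    by (force simp: shift_indices_def)
  then show ?thesis
    by (simp add: beta_degenerate)
qed

lemma dvd_final_block_term:
  assumes "P ms" and "js \<noteq> []" and "length js < length ms"
  shows "d js ms dvd (if js = final_block (length ms) (length js)
    then Ccoef ms (length js) * alpha (last ms) (length ms) (length js) else 0)"
  using dvd_final_block[OF assms(1), of "length js"] assms(2,3)
  by (cases "js = final_block (length ms) (length js)") (simp_all add: Suc_le_eq)

lemma dvd_beta:
  assumes "P ms" and "sorted_wrt (<) js" and "\<forall>j\<in>set js. j \<le> int (length ms)"
  shows "d js ms dvd beta js ms"
  using assms
proof (induction "length ms" arbitrary: js ms rule: less_induct)
  case less
  let ?r = "length ms" and ?s = "length js"
  show ?case
  proof (cases "(\<exists>j\<in>set js. j \<le> 0) \<or> js = [] \<or> ?r \<le> ?s")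
    case True
    then show ?thesis by (simp add: beta_degenerate)
  next
    case False
    then have pos: "\<forall>j\<in>set js. 0 < j" and "js \<noteq> []" and "?s < ?r" by auto
    show ?thesis
    proof (cases "last js = int ?r")
      case True
      have "\<forall>j\<in>set (butlast js). j \<le> int (length (butlast ms))"
        using sorted_wrt_less_last[OF less.prems(2)] True \<open>?s < ?r\<close> by force
      then have "d (butlast js) (butlast ms) dvd beta (butlast js) (butlast ms)"
        using less \<open>?s < ?r\<close> by (intro less.hyps P_butlast sorted_wrt_butlast) auto
      then show ?thesis
        using beta_last[OF pos \<open>js \<noteq> []\<close> \<open>?s < ?r\<close> True]
          dvd_butlast[OF less.prems(1) \<open>js \<noteq> []\<close> \<open>?s < ?r\<close> True]
        by (auto intro: dvd_trans)
    next
      case False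
      have "last js < int ?r"
        using less.prems(3) last_in_set[OF \<open>js \<noteq> []\<close>] False by force
      then have below: "\<forall>j\<in>set js. j < int ?r"
        using sorted_wrt_le_last[OF less.prems(2)] by force
      have "d js ms dvd Ccoef ms i * alpha (last ms) ?r i * beta (shift_indices ?r i js) (window i ms)"
        if "i \<in> {?s + 1..?r - 1}" for i
        using that less below \<open>js \<noteq> []\<close>
        by (intro dvd_summand less.hyps P_window sorted_wrt_shift_indices
            shift_indices_le_length_window) (auto simp: length_window)
      moreover have "d js ms dvd
          (if js = final_block ?r ?s then Ccoef ms ?s * alpha (last ms) ?r ?s else 0)"
        using less.prems(1) \<open>js \<noteq> []\<close> \<open>?s < ?r\<close> by (rule dvd_final_block_term)
      ultimately show ?thesis
        unfolding beta_rec[OF pos \<open>js \<noteq> []\<close> \<open>?s < ?r\<close> False] dvd_minus_iff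
        by (intro dvd_add dvd_sum) auto
    qed
  qed
qed

end

section \<open>Divisibility by the product of the mu(m_t, t)\<close>

definition mu_prod_compl :: "int list \<Rightarrow> nat list \<Rightarrow> nat" where
  "mu_prod_compl js ms = (\<Prod>t\<in>{t\<in>{1..length ms}. int t \<notin> set js}. mu (ms!(t-1)) t)"

lemma mu_dvd_self: "mu m t dvd m"
  unfolding mu_def by (rule div_dvd_self) (rule gcd_dvd1)

lemma mu_dvd_pow_mult_mu_diff: "mu m t dvd m ^ k * mu m (t - k)"
  by (cases k) (simp_all add: mu_dvd_self)

lemma Ccoef_eq_of_nat:
  "Ccoef ms i = int ((\<Prod>j\<in>{1..length ms - i - 1}. ms!(j-1) ^ j)
     * (\<Prod>j\<in>{length ms - i..length ms - 1}. ms!(j-1) ^ (length ms - i - 1)))"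
  by (simp add: Ccoef_def Let_def)

lemma mu_prod_compl_butlast:
  assumes "js \<noteq> []" and "last js = int (length ms)"
  shows "mu_prod_compl js ms = mu_prod_compl (butlast js) (butlast ms)"
proof -
  have "set js = set (butlast js @ [last js])"
    using assms(1) by simp
  then have "set js = insert (last js) (set (butlast js))"
    by simp
  then have "{t\<in>{1..length ms}. int t \<notin> set js}
      = {t\<in>{1..length (butlast ms)}. int t \<notin> set (butlast js)}"
    using assms(2) by auto
  then show ?thesis
    unfolding mu_prod_compl_def by (intro prod.cong) (auto simp: nth_butlast)
qed

lemma shift_indices_compl_image:
  fixes js :: "int list"
  assumes "i < r" and "k = r - i - 1"
  shows "(\<lambda>t. t + k) ` {t\<in>{1..i}. int t \<notin> set (shift_indices r i js)}
    = {t\<in>{r-i..r-1}. int t \<notin> set js}"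
proof -
  have "r - i = k + 1" using assms by simp
  then have "set (shift_indices r i js) = (\<lambda>j. j - int k) ` set js"
    by (simp add: shift_indices_def)
  then have mem: "int t \<in> set (shift_indices r i js) \<longleftrightarrow> int (t + k) \<in> set js" for t
    by (auto simp: image_iff) (metis add_diff_cancel_right')
  show ?thesis
  proof (intro set_eqI iffI)
    fix x
    assume "x \<in> (\<lambda>t. t + k) ` {t\<in>{1..i}. int t \<notin> set (shift_indices r i js)}"
    then obtain t where "x = t + k" and "t \<in> {1..i}" and "int t \<notin> set (shift_indices r i js)"
      by blast
    then show "x \<in> {t\<in>{r-i..r-1}. int t \<notin> set js}"
      using \<open>r - i = k + 1\<close> mem[of t] by auto
  next
    fix x
    assume "x \<in> {t\<in>{r-i..r-1}. int t \<notin> set js}"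
    then have "x - k \<in> {t\<in>{1..i}. int t \<notin> set (shift_indices r i js)}" and "x = x - k + k"
      using \<open>r - i = k + 1\<close> mem[of "x - k"] by auto
    then show "x \<in> (\<lambda>t. t + k) ` {t\<in>{1..i}. int t \<notin> set (shift_indices r i js)}"
      by blast
  qed
qed

lemma mu_prod_compl_window:
  fixes ms :: "nat list" and js :: "int list" and i :: nat
  defines "r \<equiv> length ms" and "k \<equiv> length ms - i - 1"
  assumes "i < r"
  shows "mu_prod_compl (shift_indices r i js) (window i ms)
     = (\<Prod>t\<in>{t\<in>{r-i..r-1}. int t \<notin> set js}. mu (ms!(t-1)) (t - k))"
proof -
  have "window i ms ! (t - 1) = ms ! (t + k - 1)" if "t \<in> {1..i}" for t
  proof -
    have "t - 1 < i" and "t + k - 1 = k + (t - 1)" using that by auto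
    then show ?thesis using assms(3) by (simp add: window_def k_def r_def)
  qed
  moreover have "k = r - i - 1"
    by (simp add: k_def r_def)
  ultimately have "(\<Prod>t\<in>{t\<in>{r-i..r-1}. int t \<notin> set js}. mu (ms!(t-1)) (t - k))
      = (\<Prod>t\<in>{t\<in>{1..i}. int t \<notin> set (shift_indices r i js)}. mu (window i ms ! (t-1)) t)"
    using shift_indices_compl_image[OF assms(3), of k js]
    by (intro prod.reindex_cong[of "\<lambda>t. t + k"]) (simp_all add: inj_on_def)
  then show ?thesis
    unfolding mu_prod_compl_def using assms(3) by (simp add: length_window r_def)
qed

lemma prod_mu_window_dvd:
  fixes ms :: "nat list" and js :: "int list" and i :: nat
  defines "r \<equiv> length ms" and "k \<equiv> length ms - i - 1"
  assumes "i < r"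
  shows "(\<Prod>t\<in>{t\<in>{r-i..r-1}. int t \<notin> set js}. mu (ms!(t-1)) t)
    dvd (\<Prod>j\<in>{r-i..r-1}. ms!(j-1) ^ k) * mu_prod_compl (shift_indices r i js) (window i ms)"
proof -
  let ?A = "{t\<in>{r-i..r-1}. int t \<notin> set js}"
  have "(\<Prod>t\<in>?A. mu (ms!(t-1)) t) dvd (\<Prod>t\<in>?A. ms!(t-1) ^ k * mu (ms!(t-1)) (t - k))"
    by (intro prod_dvd_prod mu_dvd_pow_mult_mu_diff)
  also have "\<dots> = (\<Prod>t\<in>?A. ms!(t-1) ^ k) * (\<Prod>t\<in>?A. mu (ms!(t-1)) (t - k))"
    by (rule prod.distrib)
  also have "\<dots> dvd (\<Prod>j\<in>{r-i..r-1}. ms!(j-1) ^ k) * (\<Prod>t\<in>?A. mu (ms!(t-1)) (t - k))"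
    by (intro mult_dvd_mono dvd_refl prod_dvd_prod_subset) auto
  finally show ?thesis
    using mu_prod_compl_window[of i ms js] assms(3) by (simp add: k_def r_def)
qed

text \<open>The indices t \<notin> J split into t < r - i, the indices of the window, and t = r; their factors
  divide the first product of C_{r,i}, the second product times the shifted complement, and
  mu(m_r, r) respectively.\<close>

lemma mu_prod_compl_dvd_Ccoef:
  fixes ms :: "nat list" and js :: "int list" and i :: nat
  defines "r \<equiv> length ms"
  assumes "i < r" and range: "\<forall>j\<in>set js. int (r - i) \<le> j \<and> j < int r"
  shows "int (mu_prod_compl js ms)
    dvd Ccoef ms i * int (mu_prod_compl (shift_indices r i js) (window i ms)) * int (mu (last ms) r)"
proof -
  define k where "k = r - i - 1"
  define f where "f t = mu (ms!(t-1)) t" for t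
  define A where "A = {t\<in>{r-i..r-1}. int t \<notin> set js}"
  have rk: "r - i = k + 1" using assms(2) by (simp add: k_def)
  have "{t\<in>{1..r}. int t \<notin> set js} = ({1..k} \<union> A) \<union> {r}"
    using range rk assms(2) by (force simp: A_def)
  moreover have "{1..k} \<inter> A = {}" and "({1..k} \<union> A) \<inter> {r} = {}"
    using rk by (auto simp: A_def)
  ultimately have split: "mu_prod_compl js ms = prod f {1..k} * prod f A * f r"
    unfolding mu_prod_compl_def f_def[symmetric] r_def[symmetric]
    by (simp add: prod.union_disjoint A_def)
  have "prod f {1..k} dvd (\<Prod>j\<in>{1..k}. ms!(j-1) ^ j)"
    unfolding f_def
    by (intro prod_dvd_prod) (auto intro: dvd_trans[OF mu_dvd_self] dvd_power)
  moreover have "prod f A dvd (\<Prod>j\<in>{r-i..r-1}. ms!(j-1) ^ k)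
      * mu_prod_compl (shift_indices r i js) (window i ms)"
    using prod_mu_window_dvd[of i ms js] assms(2) by (simp add: A_def f_def k_def r_def)
  moreover have "f r = mu (last ms) r"
  proof -
    have "ms \<noteq> []" using assms(2) by (auto simp: r_def)
    then show ?thesis by (simp add: f_def r_def last_conv_nth)
  qed
  ultimately have "mu_prod_compl js ms dvd (\<Prod>j\<in>{1..k}. ms!(j-1) ^ j) * (\<Prod>j\<in>{r-i..r-1}. ms!(j-1) ^ k)
      * mu_prod_compl (shift_indices r i js) (window i ms) * mu (last ms) r"
    unfolding split by (simp add: mult_dvd_mono mult.assoc)
  then show ?thesis
    unfolding Ccoef_eq_of_nat k_def r_def by (simp flip: of_nat_mult)
qed

lemma beta_divisor_mu_prod_compl: "beta_divisor (\<lambda>_. True) (\<lambda>js ms. int (mu_prod_compl js ms))"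
proof unfold_locales
  fix ms :: "nat list" and s :: nat
  assume s: "1 \<le> s" "s < length ms"
  let ?r = "length ms" and ?js = "final_block (length ms) s"
  have shift: "shift_indices ?r s ?js = map (\<lambda>k. int (Suc k)) [0..<s]"
    using shift_indices_final_block[OF refl, of s s ?r] s by simp
  have "int t \<in> set (shift_indices ?r s ?js)" if "t \<in> {1..s}" for t
    unfolding shift set_map set_upt using that by (intro image_eqI[of _ _ "t - 1"]) auto
  then have "{t\<in>{1..length (window s ms)}. int t \<notin> set (shift_indices ?r s ?js)} = {}"
    using s by (auto simp: length_window)
  then have "mu_prod_compl (shift_indices ?r s ?js) (window s ms) = 1"
    unfolding mu_prod_compl_def by (simp only: prod.empty)
  then have "int (mu_prod_compl ?js ms) dvd Ccoef ms s * int (mu (last ms) ?r)"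
    using mu_prod_compl_dvd_Ccoef[of s ms ?js] s by (simp add: final_block_def)
  also have "\<dots> dvd Ccoef ms s * alpha (last ms) ?r s"
    using mu_dvd_alpha[of ?r "last ms" s] s by (simp add: mult_dvd_mono)
  finally show "int (mu_prod_compl ?js ms) dvd Ccoef ms s * alpha (last ms) ?r s" .
next
  fix js ms i and b :: int
  assume i: "length js < i" "i < length ms"
    and range: "\<forall>j\<in>set js. int (length ms - i) \<le> j \<and> j < int (length ms)"
    and IH: "int (mu_prod_compl (shift_indices (length ms) i js) (window i ms)) dvd b"
  have "int (mu_prod_compl js ms) dvd Ccoef ms i
      * int (mu_prod_compl (shift_indices (length ms) i js) (window i ms)) * int (mu (last ms) (length ms))"
    using mu_prod_compl_dvd_Ccoef[of i ms js] i range by simp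
  also have "\<dots> dvd Ccoef ms i * b * alpha (last ms) (length ms) i"
    using IH mu_dvd_alpha[of "length ms" "last ms" i] i by (simp add: mult_dvd_mono)
  finally show "int (mu_prod_compl js ms) dvd Ccoef ms i * alpha (last ms) (length ms) i * b"
    by (simp add: mult_ac)
qed (simp_all add: mu_prod_compl_butlast)

section \<open>Equal parameters\<close>

lemma pow_dvd_Ccoef_const:
  assumes "\<forall>x\<in>set ms. x = m" and "1 \<le> i" and "i + 1 < length ms"
  shows "int m ^ (length ms - i) dvd Ccoef ms i"
proof -
  define r where "r = length ms"
  define k where "k = r - i - 1"
  have k: "1 \<le> k" "k < r" "r - i = k + 1"
    using assms(3) by (simp_all add: k_def r_def)
  have entry: "ms!(j-1) = m" if "1 \<le> j" "j \<le> r" for j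
    using assms(1) that by (simp add: r_def)
  have "ms!(k-1) ^ k dvd (\<Prod>j\<in>{1..k}. ms!(j-1) ^ j)"
    using k by (intro dvd_prodI) simp_all
  then have "m ^ k dvd (\<Prod>j\<in>{1..k}. ms!(j-1) ^ j)"
    using entry[of k] k by simp
  moreover have "(\<Prod>j\<in>{r-i..r-1}. ms!(j-1) ^ k) = m ^ (k * i)"
  proof -
    have "(\<Prod>j\<in>{r-i..r-1}. ms!(j-1) ^ k) = (\<Prod>j\<in>{r-i..r-1}. m ^ k)"
      using assms(3) entry by (intro prod.cong) (auto simp: r_def)
    also have "\<dots> = m ^ (k * i)"
      using assms(3) by (simp add: r_def power_mult)
    finally show ?thesis .
  qed
  ultimately have "m ^ (k + k * i) dvd (\<Prod>j\<in>{1..k}. ms!(j-1) ^ j) * (\<Prod>j\<in>{r-i..r-1}. ms!(j-1) ^ k)"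
    by (simp add: power_add mult_dvd_mono)
  moreover have "m ^ (r - i) dvd m ^ (k + k * i)"
    using k assms(2) by (intro le_imp_power_dvd) simp
  ultimately have "m ^ (r - i) dvd (\<Prod>j\<in>{1..k}. ms!(j-1) ^ j) * (\<Prod>j\<in>{r-i..r-1}. ms!(j-1) ^ k)"
    by (rule dvd_trans[rotated])
  then show ?thesis
    unfolding Ccoef_eq_of_nat r_def[symmetric] k_def[symmetric]
    by (simp flip: of_nat_power of_nat_mult del: of_nat_prod)
qed

lemma pow_dvd_Ccoef_alpha_const:
  assumes "\<forall>x\<in>set ms. x = m" and "2 \<le> i" and "i < length ms"
  shows "int m ^ (length ms - i) dvd Ccoef ms i * alpha m (length ms) i"
proof (cases "i = length ms - 1")
  case True
  have "int m dvd int m ^ (length ms - 2)"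
    using assms(2,3) by simp
  also have "\<dots> dvd int (m div gcd m 2) * int m ^ (length ms - 2)"
    by simp
  also have "\<dots> dvd alpha m (length ms) i"
    using alpha_subdiag_dvd[of "length ms" m] assms(2,3) True by simp
  finally show ?thesis
    using True assms(3) by simp
next
  case False
  then show ?thesis
    using pow_dvd_Ccoef_const[OF assms(1), of i] assms(2,3) by simp
qed

lemma pow_div_gcd_dvd_Ccoef_alpha_const:
  assumes "\<forall>x\<in>set ms. x = m" and "1 \<le> s" and "s < length ms"
  shows "int (m ^ (length ms - s) div gcd m 2) dvd Ccoef ms s * alpha m (length ms) s"
proof (cases "s = length ms - 1")
  case True
  have "Ccoef ms s = 1"
    using True by (simp add: Ccoef_def Let_def)
  moreover have "int (m div gcd m 2) dvd alpha m (length ms) s"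
    using alpha_subdiag_dvd[of "length ms" m] assms(2,3) True dvd_mult_left by fastforce
  ultimately show ?thesis
    using True assms(3) by simp
next
  case False
  have "gcd m 2 dvd m ^ (length ms - s)"
    using assms(3) by (intro dvd_trans[OF gcd_dvd1 dvd_power]) simp
  then have "int (m ^ (length ms - s) div gcd m 2) dvd int m ^ (length ms - s)"
    unfolding of_nat_power[symmetric] of_nat_dvd_iff by (rule div_dvd_self)
  also have "\<dots> dvd Ccoef ms s"
    using pow_dvd_Ccoef_const[OF assms(1,2)] assms(3) False by simp
  finally show ?thesis
    by simp
qed

lemma beta_divisor_const:
  "beta_divisor (\<lambda>ms. \<forall>x\<in>set ms. x = m) (\<lambda>js ms. int (m ^ (length ms - length js) div gcd m 2))"
proof unfold_locales
  fix ms :: "nat list" and s :: nat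
  assume const: "\<forall>x\<in>set ms. x = m" and s: "1 \<le> s" "s < length ms"
  then have "last ms = m"
    using last_in_set[of ms] by fastforce
  then show "int (m ^ (length ms - length (final_block (length ms) s)) div gcd m 2)
      dvd Ccoef ms s * alpha (last ms) (length ms) s"
    using pow_div_gcd_dvd_Ccoef_alpha_const[OF const s] by (simp add: final_block_def)
next
  fix js ms i and b :: int
  assume const: "\<forall>x\<in>set ms. x = m" and "js \<noteq> []" and i: "length js < i" "i < length ms"
    and IH: "int (m ^ (length (window i ms) - length (shift_indices (length ms) i js)) div gcd m 2)
      dvd b"
  let ?r = "length ms" and ?s = "length js"
  have "gcd m 2 dvd m ^ (i - ?s)"
    using i by (intro dvd_trans[OF gcd_dvd1 dvd_power]) simp
  then have "m ^ (?r - ?s) div gcd m 2 = m ^ (?r - i) * (m ^ (i - ?s) div gcd m 2)"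
    using i by (simp add: div_mult_swap power_add[symmetric])
  moreover have "int m ^ (?r - i) dvd Ccoef ms i * alpha (last ms) ?r i"
  proof -
    have "last ms = m"
      using const last_in_set[of ms] i by fastforce
    moreover have "2 \<le> i"
      using i \<open>js \<noteq> []\<close> by (cases js) auto
    ultimately show ?thesis
      using pow_dvd_Ccoef_alpha_const[OF const _ i(2)] by simp
  qed
  moreover have "int (m ^ (i - ?s) div gcd m 2) dvd b"
    using IH i by (simp add: length_window shift_indices_def)
  ultimately show "int (m ^ (?r - ?s) div gcd m 2) dvd Ccoef ms i * alpha (last ms) ?r i * b"
    by (simp add: mult_dvd_mono)
qed (auto dest: in_set_butlastD subsetD[OF set_window_subset])

theorem lemma2p7:
  fixes ms :: "nat list" and js :: "int list"
  assumes "length ms \<ge> 2"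
    and "\<forall>m\<in>set ms. m \<ge> 2"
    and "1 \<le> length js" and "length js \<le> length ms - 1"
    and "sorted_wrt (<) js"
    and "\<forall>j\<in>set js. 1 \<le> j \<and> j \<le> int (length ms)"
  shows "int (\<Prod>t\<in>{t\<in>{1..length ms}. int t \<notin> set js}. mu (ms!(t-1)) t) dvd beta js ms
     \<and> (\<forall>m. (\<forall>x\<in>set ms. x = m) \<longrightarrow>
            int (m ^ (length ms - length js) div gcd m 2) dvd beta js ms)"
proof
  \<comment> \<open>Only sortedness and the upper bound on the indices are needed: outside the range of the
    paper's definition beta is 0.\<close>
  have bounded: "\<forall>j\<in>set js. j \<le> int (length ms)"
    using assms(6) by blast
  show "int (\<Prod>t\<in>{t\<in>{1..length ms}. int t \<notin> set js}. mu (ms!(t-1)) t) dvd beta js ms"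
    using beta_divisor.dvd_beta[OF beta_divisor_mu_prod_compl _ assms(5) bounded]
    by (simp add: mu_prod_compl_def)
  show "\<forall>m. (\<forall>x\<in>set ms. x = m) \<longrightarrow> int (m ^ (length ms - length js) div gcd m 2) dvd beta js ms"
    using beta_divisor.dvd_beta[OF beta_divisor_const _ assms(5) bounded] by blast
qed

end
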